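(* Let $(X,\mathrm{d})$ be a metric space, $P\subseteq X$ finite with $n$ points, $r,\varepsilon>0$, and let $\mathcal{F}$ be an $(r,r_2,p_1,p_2)$-sensitive family of hash functions on $X$ with $r_2\le r(1+\varepsilon)$. For any query point $q\in X$, the output set $S$ of the query procedure of the structure $\mathcal{A}(P,r,\varepsilon)$ (described in the context) satisfies $N_P(q,r)\subseteq S$ with probability at least $1-n^{1-c\ln\frac52}$.
   Context: Notation: $N_P(x,r)$ is the set of points of $P\setminus\{x\}$ at distance at most $r$ from $x$. A family $\mathcal{F}$ of functions $X\to\mathbb{Z}$ with a probability distribution is $(r_1,r_2,p_1,p_2)$-sensitive ($r_1<r_2$, $1>p_1>p_2>0$) if for all $x,y\in X$: $\mathrm{d}(x,y)\le r_1\Rightarrow \Pr[f(x)=f(y)]\ge p_1$ and $\mathrm{d}(x,y)\ge r_2\Rightarrow \Pr[f(x)=f(y)]\le p_2$. Structure $\mathcal{A}(P,r,\varepsilon)$: let $\varrho=\ln p_1/\ln p_2$, $k=\lceil \ln n/\ln(1/p_2)\rceil$, $L=\lceil n^\varrho/p_1\rceil$, and let $\mathcal{G}$ be the family of maps $g=(f_1,\dots,f_k):X\to\mathbb{Z}^k$ whose coordinates are drawn independently from $\mathcal{F}$. For each of $\lceil c\ln n\rceil$ rounds ($c>0$ a fixed constant), independently draw $g_1,\dots,g_L$ from $\mathcal{G}$ and insert every $p\in P$ into hash table $H_j$ under key $g_j(p)$. Query: given $q$, for every round and every $j$, retrieve all points stored in $H_j$ under key $g_j(q)$ and insert each such $p$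 into $S$ iff $\mathrm{d}(q,p)\le r$; return $S$. *)

theory Defs
  imports "HOL-Probability.Probability"
begin

definition nbhd :: "'a::metric_space set \<Rightarrow> 'a \<Rightarrow> real \<Rightarrow> 'a set" where
  "nbhd P x r = {y \<in> P - {x}. dist x y \<le> r}"

definition sensitive ::
  "('a::metric_space \<Rightarrow> int) measure \<Rightarrow> real \<Rightarrow> real \<Rightarrow> real \<Rightarrow> real \<Rightarrow> bool" where
  "sensitive F r1 r2 p1 p2 \<longleftrightarrow>
     prob_space F \<and> r1 < r2 \<and> 0 < p2 \<and> p2 < p1 \<and> p1 < 1 \<and>
     (\<forall>x y. {f \<in> space F. f x = f y} \<in> sets F) \<and>
     (\<forall>x y. dist x y \<le> r1 \<longrightarrow> measure F {f \<in> space F. f x = f y} \<ge> p1) \<and>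
     (\<forall>x y. dist x y \<ge> r2 \<longrightarrow> measure F {f \<in> space F. f x = f y} \<le> p2)"

definition lsh_rho :: "real \<Rightarrow> real \<Rightarrow> real" where
  "lsh_rho p1 p2 = ln p1 / ln p2"

definition lsh_k :: "nat \<Rightarrow> real \<Rightarrow> nat" where
  "lsh_k n p2 = nat \<lceil>ln (real n) / ln (1 / p2)\<rceil>"

definition lsh_L :: "nat \<Rightarrow> real \<Rightarrow> real \<Rightarrow> nat" where
  "lsh_L n p1 p2 = nat \<lceil>real n powr lsh_rho p1 p2 / p1\<rceil>"

definition lsh_rounds :: "real \<Rightarrow> nat \<Rightarrow> nat" where
  "lsh_rounds c n = nat \<lceil>c * ln (real n)\<rceil>"

text \<open>All random choices of the structure: h (i,j,l) is the l-th coordinate f_l of the map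
  g_j of round i (i < rounds, j < L, l < k), all drawn independently from F.\<close>
definition lsh_index :: "nat \<Rightarrow> nat \<Rightarrow> nat \<Rightarrow> (nat \<times> nat \<times> nat) set" where
  "lsh_index R L k = {..<R} \<times> {..<L} \<times> {..<k}"

definition lsh_space ::
  "('a \<Rightarrow> int) measure \<Rightarrow> nat \<Rightarrow> nat \<Rightarrow> nat \<Rightarrow> (nat \<times> nat \<times> nat \<Rightarrow> 'a \<Rightarrow> int) measure" where
  "lsh_space F R L k = PiM (lsh_index R L k) (\<lambda>_. F)"

definition lsh_g :: "nat \<Rightarrow> (nat \<times> nat \<times> nat \<Rightarrow> 'a \<Rightarrow> int) \<Rightarrow> nat \<Rightarrow> nat \<Rightarrow> 'a \<Rightarrow> int list" where
  "lsh_g k h i j x = map (\<lambda>l. h (i, j, l) x) [0..<k]"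

definition bucket :: "'a set \<Rightarrow> ('a \<Rightarrow> 'b) \<Rightarrow> 'b \<Rightarrow> 'a set" where
  "bucket P g key = {p \<in> P. g p = key}"

definition lsh_query ::
  "'a::metric_space set \<Rightarrow> real \<Rightarrow> nat \<Rightarrow> nat \<Rightarrow> nat \<Rightarrow> (nat \<times> nat \<times> nat \<Rightarrow> 'a \<Rightarrow> int) \<Rightarrow> 'a \<Rightarrow> 'a set" where
  "lsh_query P r R L k h q =
     (\<Union>i\<in>{..<R}. \<Union>j\<in>{..<L}. {p \<in> bucket P (lsh_g k h i j) (lsh_g k h i j q). dist q p \<le> r})"

end

theory Submission
  imports Defs
begin

text \<open>
  Fix a neighbour p of q. A single map g_j puts p into the bucket of q with probability
  at least p1^k, and since k exceeds log_{1/p2} n by less than one, p1^k \<ge> p1 n^{-\<rho>} \<ge> 1/L.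
  The R L maps of all rounds are independent, so p is missed by all of them with probability
  at most (1 - 1/L)^{R L} \<le> e^{-R} \<le> n^{-c}. A union bound over the at most n neighbours
  bounds the failure probability by n^{1-c}, which is at most n^{1 - c ln(5/2)} because ln(5/2) \<le> 1.
\<close>

lemma indep_vars_PiM_components:
  assumes "prob_space M"
  shows "prob_space.indep_vars (PiM I (\<lambda>_. M)) (\<lambda>_. M) (\<lambda>i x. x i) I"
proof -
  interpret P: prob_space "PiM I (\<lambda>_. M)" by (intro prob_space_PiM assms(1))
  show ?thesis
  proof (cases "I = {}")
    case True
    show ?thesis unfolding P.indep_vars_def P.indep_sets_def using True by simp
  next
    case False
    have "distr (PiM I (\<lambda>_. M)) (PiM I (\<lambda>_. M)) (\<lambda>x. restrict (\<lambda>i. x i) I) = PiM I (\<lambda>_. M)"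
      by (subst distr_cong[where g = "\<lambda>x. x"]) (auto simp: space_PiM)
    also have "\<dots> = PiM I (\<lambda>i. distr (PiM I (\<lambda>_. M)) M (\<lambda>x. x i))"
      by (rule PiM_cong) (auto simp: distr_PiM_component[OF assms(1)])
    finally show ?thesis
      using False by (subst P.indep_vars_iff_distr_eq_PiM') auto
  qed
qed

lemma measure_PiM_Collect_all_in:
  assumes "prob_space M" and "J \<subseteq> I" "finite J" and "C \<in> sets M"
  shows "measure (PiM I (\<lambda>_. M)) {x \<in> space (PiM I (\<lambda>_. M)). \<forall>i\<in>J. x i \<in> C} = measure M C ^ card J"
proof -
  interpret product_prob_space "\<lambda>_. M" I by (intro product_prob_spaceI assms(1))
  interpret M: prob_space M by (rule assms(1))
  have "emeasure (PiM I (\<lambda>_. M)) {x \<in> space (PiM I (\<lambda>_. M)). \<forall>i\<in>J. x i \<in> C} = ennreal (measure M C ^ card J)"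
    using emeasure_PiM_Collect[OF assms(2,3,4)] by (simp add: M.emeasure_eq_measure prod_ennreal ennreal_power)
  then show ?thesis by (simp add: P.emeasure_eq_measure)
qed

lemma sets_PiM_every_block_misses:
  fixes M :: "'b measure" and C :: "'b set" and R L k :: nat
  defines "PM \<equiv> PiM ({..<R} \<times> {..<L} \<times> {..<k}) (\<lambda>_. M)"
  assumes C: "C \<in> sets M"
  shows "{x \<in> space PM. \<forall>i<R. \<forall>j<L. \<exists>l<k. x (i, j, l) \<notin> C} \<in> sets PM"
proof -
  have coord: "{x \<in> space PM. x (i, j, l) \<in> space M - C} \<in> sets PM" if "i < R" "j < L" "l < k" for i j l
  proof -
    have "{x \<in> space PM. x (i, j, l) \<in> space M - C} = (\<lambda>x. x (i, j, l)) -` (space M - C) \<inter> space PM"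
      by auto
    also have "\<dots> \<in> sets PM"
      unfolding PM_def using that C by (intro measurable_sets[OF measurable_component_singleton]) auto
    finally show ?thesis .
  qed
  have "{x \<in> space PM. \<forall>i<R. \<forall>j<L. \<exists>l<k. x (i, j, l) \<notin> C}
      = {x \<in> space PM. \<forall>i\<in>{..<R}. \<forall>j\<in>{..<L}. \<exists>l\<in>{..<k}. x (i, j, l) \<in> space M - C}"
    by (auto simp: PM_def space_PiM) blast+
  also have "\<dots> \<in> sets PM"
    using coord by (intro sets.sets_Collect_finite_All sets.sets_Collect_finite_Ex) auto
  finally show ?thesis .
qed

lemma prob_PiM_every_block_misses:
  fixes M :: "'b measure" and C :: "'b set" and R L k :: nat
  defines "PM \<equiv> PiM ({..<R} \<times> {..<L} \<times> {..<k}) (\<lambda>_. M)"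
  assumes M: "prob_space M" and C: "C \<in> sets M"
  shows "measure PM {x \<in> space PM. \<forall>i<R. \<forall>j<L. \<exists>l<k. x (i, j, l) \<notin> C} = (1 - measure M C ^ k) ^ (R * L)"
proof -
  interpret P: prob_space PM unfolding PM_def by (intro prob_space_PiM M)
  define B where "B = {..<R} \<times> {..<L}"
  define K where "K b = {fst b} \<times> {snd b} \<times> {..<k}" for b :: "nat \<times> nat"
  define Y where "Y b x = restrict x (K b)" for b and x :: "nat \<times> nat \<times> nat \<Rightarrow> 'b"
  define Miss where "Miss b = space (PiM (K b) (\<lambda>_. M)) - PiE (K b) (\<lambda>_. C)" for b
  have K_sub: "K b \<subseteq> {..<R} \<times> {..<L} \<times> {..<k}" if "b \<in> B" for b
    using that by (auto simp: K_def B_def)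
  have "P.indep_vars (\<lambda>_. M) (\<lambda>i x. x i) ({..<R} \<times> {..<L} \<times> {..<k})"
    unfolding PM_def by (rule indep_vars_PiM_components[OF M])
  then have indep_blocks: "P.indep_vars (\<lambda>b. PiM (K b) (\<lambda>_. M)) Y B"
    unfolding Y_def by (rule P.indep_vars_restrict[OF _ K_sub]) (auto simp: disjoint_family_on_def K_def)
  then have Y_meas: "Y b \<in> measurable PM (PiM (K b) (\<lambda>_. M))" if "b \<in> B" for b
    using that by (auto simp: P.indep_vars_def)
  have block_miss: "Y b -` Miss b \<inter> space PM = space PM - {x \<in> space PM. \<forall>i\<in>K b. x i \<in> C}" if "b \<in> B" for b
    using measurable_space[OF Y_meas[OF that]] by (auto simp: Y_def Miss_def)
  have prob_block_miss: "measure PM (Y b -` Miss b \<inter> space PM) = 1 - measure M C ^ k" if "b \<in> B" for b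
  proof -
    have "{x \<in> space PM. \<forall>i\<in>K b. x i \<in> C} = Y b -` PiE (K b) (\<lambda>_. C) \<inter> space PM"
      using measurable_space[OF Y_meas[OF that]] by (auto simp: Y_def space_PiM)
    also have "\<dots> \<in> P.events"
      by (intro measurable_sets[OF Y_meas[OF that]] sets_PiM_I_finite C) (simp add: K_def)
    finally have "{x \<in> space PM. \<forall>i\<in>K b. x i \<in> C} \<in> P.events" .
    then have "measure PM (Y b -` Miss b \<inter> space PM) = 1 - measure PM {x \<in> space PM. \<forall>i\<in>K b. x i \<in> C}"
      unfolding block_miss[OF that] by (rule P.prob_compl)
    then show ?thesis
      using measure_PiM_Collect_all_in[OF M K_sub[OF that] _ C] by (simp add: PM_def K_def card_cartesian_product)
  qed
  show ?thesis
  proof (cases "B = {}")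
    case True
    then have "R = 0 \<or> L = 0" by (auto simp: B_def)
    then show ?thesis using P.prob_space by auto
  next
    case False
    have "{x \<in> space PM. \<forall>i<R. \<forall>j<L. \<exists>l<k. x (i, j, l) \<notin> C} = (\<Inter>b\<in>B. Y b -` Miss b \<inter> space PM)"
      using False by (auto simp: block_miss B_def K_def) blast+
    also have "measure PM \<dots> = (\<Prod>b\<in>B. measure PM (Y b -` Miss b \<inter> space PM))"
      by (rule P.indep_varsD_finite[OF indep_blocks False])
         (auto simp: B_def Miss_def K_def intro!: sets_PiM_I_finite C)
    finally show ?thesis
      using prob_block_miss by (simp add: B_def card_cartesian_product)
  qed
qed

lemma inverse_lsh_L_le_power_lsh_k:
  assumes n: "n \<ge> 1" and p1: "0 < p1" "p1 \<le> 1" and p2: "0 < p2" "p2 < 1"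
  shows "1 / real (lsh_L n p1 p2) \<le> p1 ^ lsh_k n p2"
proof -
  define t where "t = ln (real n) / ln (1 / p2)"
  define \<rho> where "\<rho> = lsh_rho p1 p2"
  have "t \<ge> 0" using n p2 by (simp add: t_def ln_div divide_nonneg_nonpos)
  then have k: "real (lsh_k n p2) \<le> t + 1" by (simp add: lsh_k_def t_def[symmetric])
  have L: "real n powr \<rho> / p1 \<le> real (lsh_L n p1 p2)"
    unfolding lsh_L_def \<rho>_def by linarith
  have "0 < real n powr \<rho> / p1" using n p1 by simp
  then have "1 / real (lsh_L n p1 p2) \<le> 1 / (real n powr \<rho> / p1)"
    using L by (intro divide_left_mono mult_pos_pos) auto
  also have "\<dots> = p1 * real n powr (- \<rho>)"
    using n by (simp add: powr_minus field_simps)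
  also have "real n powr (- \<rho>) = p1 powr t"
    using n p1 p2 by (simp add: powr_def t_def \<rho>_def lsh_rho_def ln_div field_simps)
  also have "p1 * p1 powr t = p1 powr (t + 1)"
    using p1 by (simp add: powr_add)
  also have "\<dots> \<le> p1 powr real (lsh_k n p2)"
    using k p1 by (intro powr_mono') auto
  also have "\<dots> = p1 ^ lsh_k n p2"
    using p1 by (simp add: powr_realpow)
  finally show ?thesis .
qed

lemma lsh_L_pos:
  assumes "n \<ge> 1" and "0 < p1"
  shows "0 < lsh_L n p1 p2"
proof -
  have "0 < real n powr lsh_rho p1 p2 / p1" using assms by simp
  then show ?thesis by (simp add: lsh_L_def)
qed

lemma one_minus_inverse_power_le_exp:
  assumes "L > 0"
  shows "(1 - 1 / real L) ^ (m * L) \<le> exp (- real m)"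
proof -
  have "(1 - 1 / real L) ^ (m * L) \<le> exp (- 1 / real L) ^ (m * L)"
    using assms exp_ge_add_one_self[of "- 1 / real L"] by (intro power_mono) auto
  also have "\<dots> = exp (- real m)"
    using assms by (simp add: exp_of_nat_mult[symmetric])
  finally show ?thesis .
qed

lemma exp_neg_lsh_rounds_le:
  assumes "n \<ge> 1"
  shows "exp (- real (lsh_rounds c n)) \<le> real n powr (- c)"
proof -
  have "c * ln (real n) \<le> real (lsh_rounds c n)"
    unfolding lsh_rounds_def by linarith
  then have "exp (- real (lsh_rounds c n)) \<le> exp (- (c * ln (real n)))" by simp
  also have "\<dots> = real n powr (- c)" using assms by (simp add: powr_def)
  finally show ?thesis .
qed

lemma one_minus_power_lsh_k_le_powr:
  assumes n: "n \<ge> 1" and p1: "0 < p1" "p1 \<le> \<mu>" "\<mu> \<le> 1" and p2: "0 < p2" "p2 < 1"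
  shows "(1 - \<mu> ^ lsh_k n p2) ^ (lsh_rounds c n * lsh_L n p1 p2) \<le> real n powr (- c)"
proof -
  have "1 / real (lsh_L n p1 p2) \<le> p1 ^ lsh_k n p2"
    using inverse_lsh_L_le_power_lsh_k[OF n p1(1) _ p2] p1 by simp
  also have "\<dots> \<le> \<mu> ^ lsh_k n p2"
    using p1 by (intro power_mono) auto
  finally have "(1 - \<mu> ^ lsh_k n p2) ^ (lsh_rounds c n * lsh_L n p1 p2)
      \<le> (1 - 1 / real (lsh_L n p1 p2)) ^ (lsh_rounds c n * lsh_L n p1 p2)"
    using p1 by (intro power_mono) (auto simp: power_le_one)
  also have "\<dots> \<le> exp (- real (lsh_rounds c n))"
    by (rule one_minus_inverse_power_le_exp[OF lsh_L_pos[OF n p1(1)]])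
  also have "\<dots> \<le> real n powr (- c)"
    by (rule exp_neg_lsh_rounds_le[OF n])
  finally show ?thesis .
qed

lemma ln_five_halves_le_one: "ln (5 / 2 :: real) \<le> 1"
proof -
  have "(5 / 2 :: real) \<le> exp 1"
    using exp_lower_Taylor_quadratic[of 1] by simp
  then show ?thesis
    using ln_le_cancel_iff[of "5 / 2" "exp 1"] by simp
qed

lemma mult_powr_neg_le_powr:
  fixes m n :: nat and c a :: real
  assumes "m \<le> n" "0 \<le> c" "a \<le> 1"
  shows "real m * real n powr (- c) \<le> real n powr (1 - c * a)"
proof (cases "n = 0")
  case False
  then have "real m * real n powr (- c) \<le> real n * real n powr (- c)"
    using assms(1) by (intro mult_right_mono) auto
  also have "\<dots> = real n powr (1 - c)"
    using False by (simp add: powr_diff powr_minus field_simps)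
  also have "\<dots> \<le> real n powr (1 - c * a)"
    using False assms(2,3) by (intro powr_mono) (auto simp: mult_left_le)
  finally show ?thesis .
qed (use assms(1) in simp)

lemma mem_lsh_query_iff:
  assumes "p \<in> P" and "dist q p \<le> r"
  shows "p \<in> lsh_query P r R L k h q \<longleftrightarrow> (\<exists>i<R. \<exists>j<L. \<forall>l<k. h (i, j, l) p = h (i, j, l) q)"
  using assms by (simp add: lsh_query_def bucket_def lsh_g_def atLeast0LessThan Bex_def Ball_def)

definition lsh_miss :: "nat \<Rightarrow> nat \<Rightarrow> nat \<Rightarrow> 'a \<Rightarrow> 'a \<Rightarrow> (nat \<times> nat \<times> nat \<Rightarrow> 'a \<Rightarrow> int) set" where
  "lsh_miss R L k q p = {h. \<forall>i<R. \<forall>j<L. \<exists>l<k. h (i, j, l) p \<noteq> h (i, j, l) q}"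

lemma nbhd_subset_lsh_query_iff:
  "nbhd P q r \<subseteq> lsh_query P r R L k h q \<longleftrightarrow> h \<notin> (\<Union>p\<in>nbhd P q r. lsh_miss R L k q p)"
  by (auto simp: subset_iff nbhd_def mem_lsh_query_iff lsh_miss_def)

lemma lsh_miss_eq_every_block_misses:
  "space (lsh_space F R L k) \<inter> lsh_miss R L k q p
     = {h \<in> space (lsh_space F R L k). \<forall>i<R. \<forall>j<L. \<exists>l<k. h (i, j, l) \<notin> {f \<in> space F. f p = f q}}"
  by (auto simp: lsh_miss_def lsh_space_def lsh_index_def space_PiM PiE_def Pi_def) blast+

lemma sets_lsh_miss:
  assumes "{f \<in> space F. f p = f q} \<in> sets F"
  shows "space (lsh_space F R L k) \<inter> lsh_miss R L k q p \<in> sets (lsh_space F R L k)"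
  unfolding lsh_miss_eq_every_block_misses unfolding lsh_space_def lsh_index_def
  by (rule sets_PiM_every_block_misses[OF assms])

lemma prob_lsh_miss:
  assumes "prob_space F" and "{f \<in> space F. f p = f q} \<in> sets F"
  shows "measure (lsh_space F R L k) (space (lsh_space F R L k) \<inter> lsh_miss R L k q p)
           = (1 - measure F {f \<in> space F. f p = f q} ^ k) ^ (R * L)"
  unfolding lsh_miss_eq_every_block_misses unfolding lsh_space_def lsh_index_def
  by (rule prob_PiM_every_block_misses[OF assms])

lemma prob_lsh_miss_le:
  fixes P :: "'a::metric_space set" and F :: "('a \<Rightarrow> int) measure" and c p1 p2 :: real
  defines "n \<equiv> card P"
  defines "M \<equiv> lsh_space F (lsh_rounds c n) (lsh_L n p1 p2) (lsh_k n p2)"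
  assumes F: "sensitive F r r2 p1 p2" and "finite P" and p: "p \<in> nbhd P q r"
  shows "measure M (space M \<inter> lsh_miss (lsh_rounds c n) (lsh_L n p1 p2) (lsh_k n p2) q p)
           \<le> real n powr (- c)"
proof -
  have F: "prob_space F" "0 < p2" "p2 < p1" "p1 < 1" "{f \<in> space F. f p = f q} \<in> sets F"
    "p1 \<le> measure F {f \<in> space F. f p = f q}"
    using F p unfolding sensitive_def by (auto simp: nbhd_def dist_commute)
  have "n \<ge> 1"
    using p \<open>finite P\<close> by (auto simp: n_def nbhd_def Suc_le_eq card_gt_0_iff)
  moreover have "measure F {f \<in> space F. f p = f q} \<le> 1"
    by (rule prob_space.prob_le_1[OF F(1)])
  ultimately show ?thesis
    unfolding M_def prob_lsh_miss[OF F(1,5)]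
    using F(2-4,6) by (intro one_minus_power_lsh_k_le_powr) auto
qed

theorem lemma1:
  fixes P :: "'a::metric_space set" and F :: "('a \<Rightarrow> int) measure"
    and r eps r2 p1 p2 c :: real and q :: 'a
  assumes "finite P"
    and "r > 0" and "eps > 0" and "c > 0"
    and "sensitive F r r2 p1 p2"
    and "r2 \<le> r * (1 + eps)"
  shows "measure (lsh_space F (lsh_rounds c (card P)) (lsh_L (card P) p1 p2) (lsh_k (card P) p2))
           {h \<in> space (lsh_space F (lsh_rounds c (card P)) (lsh_L (card P) p1 p2) (lsh_k (card P) p2)).
              nbhd P q r \<subseteq> lsh_query P r (lsh_rounds c (card P)) (lsh_L (card P) p1 p2)
                                 (lsh_k (card P) p2) h q}
         \<ge> 1 - real (card P) powr (1 - c * ln (5/2))"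
proof -
  define n where "n = card P"
  define M where "M = lsh_space F (lsh_rounds c n) (lsh_L n p1 p2) (lsh_k n p2)"
  define Miss where "Miss p = space M \<inter> lsh_miss (lsh_rounds c n) (lsh_L n p1 p2) (lsh_k n p2) q p" for p
  interpret M: prob_space M
    using assms(5) unfolding M_def lsh_space_def sensitive_def by (intro prob_space_PiM) auto
  have Miss_events: "Miss p \<in> M.events" for p
    using assms(5) unfolding Miss_def M_def sensitive_def by (intro sets_lsh_miss) auto
  have nbhd_finite: "finite (nbhd P q r)" and nbhd_card: "card (nbhd P q r) \<le> n"
    using assms(1) by (auto simp: nbhd_def n_def intro: card_mono)
  have "measure M (\<Union>p\<in>nbhd P q r. Miss p) \<le> (\<Sum>p\<in>nbhd P q r. measure M (Miss p))"
    using Miss_events by (intro M.finite_measure_subadditive_finite nbhd_finite) auto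
  also have "\<dots> \<le> (\<Sum>p\<in>nbhd P q r. real n powr (- c))"
    unfolding Miss_def M_def n_def by (intro sum_mono prob_lsh_miss_le[OF assms(5,1)])
  also have "\<dots> = real (card (nbhd P q r)) * real n powr (- c)"
    by simp
  also have "\<dots> \<le> real n powr (1 - c * ln (5/2))"
    using nbhd_card assms(4) ln_five_halves_le_one by (intro mult_powr_neg_le_powr) auto
  finally have "1 - real n powr (1 - c * ln (5/2)) \<le> measure M (space M - (\<Union>p\<in>nbhd P q r. Miss p))"
    using M.prob_compl[OF sets.finite_UN[OF nbhd_finite Miss_events]] by simp
  moreover have "space M - (\<Union>p\<in>nbhd P q r. Miss p)
      = {h \<in> space M. nbhd P q r \<subseteq> lsh_query P r (lsh_rounds c n) (lsh_L n p1 p2) (lsh_k n p2) h q}"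
    by (auto simp: Miss_def nbhd_subset_lsh_query_iff)
  ultimately show ?thesis by (simp add: M_def n_def)
qed

end
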